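(* Let $\Omega_1,\Omega_2$ be finite sets and $(\Omega_1^k\times\Omega_2^k,\mu)$ a probability space such that the marginal of $\mu$ on any pair of coordinates, one from the $\Omega_1^k$ part and one from the $\Omega_2^k$ part, is a product distribution. Let $\mu_1,\mu_2$ be the marginals of $\mu$ on $\Omega_1^k$ and $\Omega_2^k$. Let $X,Y$ be random $k\times L$ matrices (entries in $\Omega_1$, resp. $\Omega_2$) chosen so that independently for each $i\in[L]$ the pair of $i$-th columns $(x^i,y^i)\in\Omega_1^k\times\Omega_2^k$ is drawn from $\mu$; let $x_j\in\Omega_1^L$, $y_j\in\Omega_2^L$ denote the $j$-th rows. Let $F:\Omega_1^L\to[-1,1]$ and $G:\Omega_2^L\to[-1,1]$ and set $$\tau:=\sqrt{\sum_{i\in[L]}\mathrm{Inf}_i[F]\,\mathrm{Inf}_i[G]},\qquad \Gamma:=\max\Big\{\sqrt{\textstyle\sum_{i\in[L]}\mathrm{Inf}_i[F]},\ \sqrt{\textstyle\sum_{i\in[L]}\mathrm{Inf}_i[G]}\Big\}.$$ Then $$\Big|\mathbb{E}_{(X,Y)\sim\mu^{\otimes L}}\Big[\prod_{j\in[k]}F(x_j)G(y_j)\Big]-\mathbb{E}_{X\sim\mu_1^{\otimes L}}\Big[\prod_{j\in[k]}F(x_j)\Big]\,\mathbb{E}_{Y\sim\mu_2^{\otimes L}}\Big[\prod_{j\in[k]}G(y_j)\Big]\Big|\le 2^{O(k)}\,\Gamma\,\tau,$$ where the $O(\cdot)$ hides an absolute constant.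
   Context: Influences of $F:\Omega_1^L\to\mathbb{R}$ are taken with respect to the product measure on $\Omega_1^L$ whose coordinate marginals are the single-coordinate marginals of $\mu_1$ (and similarly for $G$ with $\mu_2$): $\mathrm{Inf}_i[F]:=\mathbb{E}_{x_{-i}}\mathrm{Var}_{x_i}[F(x_1,\dots,x_L)]$, equivalently $\sum_{\beta\ni i}\|F_\beta\|_2^2$ for the Efron–Stein decomposition $F=\sum_{\beta\subseteq[L]}F_\beta$. In $X\sim\mu_1^{\otimes L}$ the columns of $X$ are independent samples from $\mu_1$ (and similarly for $Y$). *)

theory Defs
  imports "HOL-Probability.Probability"
begin

definition prod_pmf :: "nat \<Rightarrow> 'a pmf \<Rightarrow> (nat \<Rightarrow> 'a) pmf" where
  "prod_pmf L \<nu> = Pi_pmf {..<L} undefined (\<lambda>_. \<nu>)"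

definition influence :: "'a pmf \<Rightarrow> nat \<Rightarrow> ((nat \<Rightarrow> 'a) \<Rightarrow> real) \<Rightarrow> nat \<Rightarrow> real" where
  "influence \<nu> L F i =
     measure_pmf.expectation (prod_pmf L \<nu>)
       (\<lambda>x. measure_pmf.variance \<nu> (\<lambda>a. F (x(i := a))))"

(* j-th row of a k x L matrix given by its columns Z 0, ..., Z (L-1) *)
definition row :: "nat \<Rightarrow> (nat \<Rightarrow> (nat \<Rightarrow> 'a)) \<Rightarrow> nat \<Rightarrow> (nat \<Rightarrow> 'a)" where
  "row L Z j = restrict (\<lambda>i. Z i j) {..<L}"

end

theory Submission
  imports Defs
begin

text \<open>
  Let \<open>\<pi>\<close> be the product of the two marginals of \<open>\<mu>\<close>.  Like \<open>\<mu>\<close>, it has law \<open>\<nu>\<^sub>1 \<otimes> \<nu>\<^sub>2\<close> on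
  every cross pair of coordinates, and under \<open>\<pi>\<^sup>\<otimes>\<^sup>L\<close> the expectation factors.  Replace the columns
  of \<open>\<mu>\<^sup>\<otimes>\<^sup>L\<close> by \<open>\<pi>\<close> one at a time.  Conditioned on the other columns, the integrand is
  \<open>\<Prod>\<^sub>j f\<^sub>j(x\<^sub>j) g\<^sub>j(y\<^sub>j)\<close> in the swapped column \<open>(x, y)\<close>.  Expand \<open>\<Prod>\<^sub>j f\<^sub>j\<close> and \<open>\<Prod>\<^sub>j g\<^sub>j\<close> to
  first order around the means: the constant and linear parts have the same expectation under
  \<open>\<mu>\<close> and \<open>\<pi>\<close>, since they only see single coordinates, and the product of the two linear parts
  has mean zero by pairwise independence.  The remainder is at most \<open>A B\<^sup>2 + A\<^sup>2 B\<close> with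
  \<open>A = \<Sum>\<^sub>j \<bar>f\<^sub>j - E f\<^sub>j\<bar>\<close>, \<open>B = \<Sum>\<^sub>j \<bar>g\<^sub>j - E g\<^sub>j\<bar>\<close>, and AM-GM with a free weight \<open>l\<close> bounds its
  expectation by the variances of the \<open>f\<^sub>j\<close> and \<open>g\<^sub>j\<close>, whose averages over the other columns
  are the influences.  Summing over the columns and optimising \<open>l\<close> gives the bound
  \<open>4 k\<^sup>3 \<Gamma> \<tau> \<le> 2\<^bsup>5k\<^esup> \<Gamma> \<tau>\<close>.
\<close>

lemma integrable_measure_pmf_bounded:
  fixes f :: "'a \<Rightarrow> real"
  assumes "\<And>x. \<bar>f x\<bar> \<le> B"
  shows "integrable (measure_pmf p) f"
  by (rule measure_pmf.integrable_const_bound[where B=B]) (use assms in auto)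

lemma abs_expectation_pmf_le:
  fixes f :: "'a \<Rightarrow> real"
  assumes "\<And>x. \<bar>f x\<bar> \<le> B"
  shows "\<bar>measure_pmf.expectation p f\<bar> \<le> B"
proof -
  have "0 \<le> B" using assms[of undefined] by linarith
  have "\<bar>measure_pmf.expectation p f\<bar> \<le> measure_pmf.expectation p (\<lambda>x. \<bar>f x\<bar>)"
    by (rule integral_abs_bound)
  also have "\<dots> \<le> measure_pmf.expectation p (\<lambda>x. B)"
    using assms \<open>0 \<le> B\<close> by (intro integral_mono integrable_measure_pmf_bounded[where B=B]) auto
  finally show ?thesis by simp
qed

lemma expectation_pmf_cong:
  fixes f g :: "'a \<Rightarrow> real"
  assumes "\<And>x. x \<in> set_pmf p \<Longrightarrow> f x = g x"
  shows "measure_pmf.expectation p f = measure_pmf.expectation p g"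
  by (rule Bochner_Integration.integral_cong_AE) (auto intro!: AE_pmfI assms)

lemma variance_pmf_cong:
  fixes f g :: "'a \<Rightarrow> real"
  assumes "\<And>x. x \<in> set_pmf p \<Longrightarrow> f x = g x"
  shows "measure_pmf.variance p f = measure_pmf.variance p g"
proof -
  have "measure_pmf.expectation p f = measure_pmf.expectation p g"
    by (rule expectation_pmf_cong) (rule assms)
  then show ?thesis by (intro expectation_pmf_cong) (simp add: assms)
qed

lemma variance_pmf_bounds:
  fixes f :: "'a \<Rightarrow> real"
  assumes "\<And>x. \<bar>f x\<bar> \<le> 1"
  shows "0 \<le> measure_pmf.variance p f" "measure_pmf.variance p f \<le> 4"
proof -
  have "\<bar>f x - measure_pmf.expectation p f\<bar> \<le> 2" for x
    using assms[of x] abs_expectation_pmf_le[of f 1 p] assms by fastforce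
  then have "\<bar>f x - measure_pmf.expectation p f\<bar>\<^sup>2 \<le> 2\<^sup>2" for x
    by (intro power_mono) auto
  then have "\<bar>(f x - measure_pmf.expectation p f)\<^sup>2\<bar> \<le> 4" for x
    by simp
  then show "measure_pmf.variance p f \<le> 4"
    using abs_expectation_pmf_le[where B=4] by fastforce
qed simp

lemma expectation_bind_pmf:
  fixes f :: "'a \<Rightarrow> real"
  assumes "\<And>x. \<bar>f x\<bar> \<le> B"
  shows "measure_pmf.expectation (bind_pmf M N) f
           = measure_pmf.expectation M (\<lambda>x. measure_pmf.expectation (N x) f)"
  unfolding measure_pmf_bind
  by (rule integral_bind[where K="count_space UNIV" and B=B and B'=1])
     (use assms measurable_measure_pmf[of N] in
       \<open>auto simp: measure_pmf.emeasure_space_1 prob_space_measure_pmf\<close>)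

lemma expectation_pair_pmf:
  fixes f :: "'a \<times> 'b \<Rightarrow> real"
  assumes "\<And>x. \<bar>f x\<bar> \<le> B"
  shows "measure_pmf.expectation (pair_pmf M N) f
           = measure_pmf.expectation M (\<lambda>a. measure_pmf.expectation N (\<lambda>b. f (a, b)))"
  unfolding pair_pmf_def using assms by (simp add: expectation_bind_pmf[where B=B])

lemma expectation_pair_pmf_mult:
  fixes f :: "'a \<Rightarrow> real" and g :: "'b \<Rightarrow> real"
  assumes "\<And>x. \<bar>f x\<bar> \<le> B" "\<And>y. \<bar>g y\<bar> \<le> B'"
  shows "measure_pmf.expectation (pair_pmf M N) (\<lambda>(a, b). f a * g b)
           = measure_pmf.expectation M f * measure_pmf.expectation N g"
proof -
  have "\<bar>f a * g b\<bar> \<le> B * B'" for a b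
    unfolding abs_mult using assms by (intro mult_mono) (auto intro: order_trans[OF abs_ge_zero])
  then show ?thesis
    by (subst expectation_pair_pmf[where B="B * B'"]) auto
qed

section \<open>Product pmfs and rows\<close>

lemma Pi_pmf_fun_upd:
  assumes "finite A" "t \<in> A"
  shows "Pi_pmf A d (p(t := q)) = bind_pmf (Pi_pmf A d p) (\<lambda>Z. map_pmf (\<lambda>c. Z(t := c)) q)"
proof -
  define A' where "A' = A - {t}"
  have A: "A = insert t A'" "t \<notin> A'" "finite A'" using assms by (auto simp: A'_def)
  have p: "Pi_pmf A' d (p(t := q)) = Pi_pmf A' d p"
    by (rule Pi_pmf_cong) (use A in auto)
  have "Pi_pmf A d (p(t := q)) = map_pmf (\<lambda>(y, f). f(t := y)) (pair_pmf q (Pi_pmf A' d p))"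
    unfolding A(1) using A by (subst Pi_pmf_insert) (auto simp: p)
  also have "\<dots> = bind_pmf (Pi_pmf A' d p) (\<lambda>f. map_pmf (\<lambda>c. f(t := c)) q)"
    unfolding map_pmf_def pair_pmf_def
    by (subst bind_commute_pmf) (simp add: bind_assoc_pmf bind_return_pmf)
  also have "\<dots> = bind_pmf (Pi_pmf A d p) (\<lambda>Z. map_pmf (\<lambda>c. Z(t := c)) q)"
    unfolding A(1) using A
    by (subst Pi_pmf_insert)
       (auto simp: map_pmf_def pair_pmf_def bind_assoc_pmf bind_return_pmf bind_pmf_const)
  finally show ?thesis .
qed

lemma expectation_Pi_pmf_fun_upd:
  fixes \<Phi> :: "('i \<Rightarrow> 'a) \<Rightarrow> real"
  assumes "finite A" "t \<in> A" "\<And>Z. \<bar>\<Phi> Z\<bar> \<le> B"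
  shows "measure_pmf.expectation (Pi_pmf A d (p(t := q))) \<Phi>
           = measure_pmf.expectation (Pi_pmf A d p)
               (\<lambda>Z. measure_pmf.expectation q (\<lambda>c. \<Phi> (Z(t := c))))"
  using assms by (simp add: Pi_pmf_fun_upd expectation_bind_pmf[where B=B])

lemma Pi_pmf_pair_pmf:
  assumes "finite A"
  shows "Pi_pmf A d (\<lambda>i. pair_pmf (p i) (q i)) =
    map_pmf (\<lambda>(u, v) i. if i \<in> A then (u i, v i) else d)
      (pair_pmf (Pi_pmf A undefined p) (Pi_pmf A undefined q))"
proof -
  have "Pi_pmf A d (\<lambda>i. pair_pmf (p i) (q i)) =
        Pi_pmf A d (\<lambda>i. bind_pmf (p i) (\<lambda>a. bind_pmf (q i) (\<lambda>b. return_pmf (a, b))))"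
    by (simp add: pair_pmf_def)
  also have "\<dots> = bind_pmf (Pi_pmf A undefined p)
      (\<lambda>u. Pi_pmf A d (\<lambda>i. bind_pmf (q i) (\<lambda>b. return_pmf (u i, b))))"
    by (rule Pi_pmf_bind[OF assms])
  also have "\<dots> = bind_pmf (Pi_pmf A undefined p) (\<lambda>u. bind_pmf (Pi_pmf A undefined q)
      (\<lambda>v. Pi_pmf A d (\<lambda>i. return_pmf (u i, v i))))"
    by (subst Pi_pmf_bind[OF assms]) rule
  also have "\<dots> = map_pmf (\<lambda>(u, v) i. if i \<in> A then (u i, v i) else d)
      (pair_pmf (Pi_pmf A undefined p) (Pi_pmf A undefined q))"
    using assms by (simp add: map_pmf_def pair_pmf_def bind_assoc_pmf bind_return_pmf)
  finally show ?thesis .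
qed

lemma set_pmf_prod_pmf: "set_pmf (prod_pmf L p) = PiE_dflt {..<L} undefined (\<lambda>_. set_pmf p)"
  unfolding prod_pmf_def by (simp add: set_Pi_pmf)

lemma row_fun_upd: "t < L \<Longrightarrow> row L (X(t := c)) j = (row L X j)(t := c j)"
  by (auto simp: row_def fun_eq_iff restrict_def)

lemma row_in_PiE:
  assumes "\<And>i. i < L \<Longrightarrow> X i \<in> PiE {..<k} (\<lambda>_. \<Omega>)" "j < k"
  shows "row L X j \<in> PiE {..<L} (\<lambda>_. \<Omega>)"
  using assms by (auto simp: row_def PiE_def Pi_def)

text \<open>The hypothesis on \<open>\<mu>\<close> in the theorem, with \<open>\<nu>\<^sub>1\<close>, \<open>\<nu>\<^sub>2\<close> the common coordinate marginals.\<close>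

definition pairwise_product ::
    "nat \<Rightarrow> 'a pmf \<Rightarrow> 'b pmf \<Rightarrow> ((nat \<Rightarrow> 'a) \<times> (nat \<Rightarrow> 'b)) pmf \<Rightarrow> bool" where
  "pairwise_product k \<nu>1 \<nu>2 \<rho> \<longleftrightarrow>
     (\<forall>j1<k. \<forall>j2<k. map_pmf (\<lambda>c. (fst c j1, snd c j2)) \<rho> = pair_pmf \<nu>1 \<nu>2)"

lemma pairwise_product_marginals:
  assumes "pairwise_product k \<nu>1 \<nu>2 \<rho>" "j < k"
  shows "map_pmf (\<lambda>c. fst c j) \<rho> = \<nu>1" "map_pmf (\<lambda>c. snd c j) \<rho> = \<nu>2"
proof -
  have \<rho>: "map_pmf (\<lambda>c. (fst c j, snd c j)) \<rho> = pair_pmf \<nu>1 \<nu>2"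
    using assms unfolding pairwise_product_def by blast
  show "map_pmf (\<lambda>c. fst c j) \<rho> = \<nu>1"
    using arg_cong[OF \<rho>, of "map_pmf fst"] by (simp add: pmf.map_comp o_def map_fst_pair_pmf)
  show "map_pmf (\<lambda>c. snd c j) \<rho> = \<nu>2"
    using arg_cong[OF \<rho>, of "map_pmf snd"] by (simp add: pmf.map_comp o_def map_snd_pair_pmf)
qed

lemma pairwise_product_decoupled:
  assumes "pairwise_product k \<nu>1 \<nu>2 \<mu>"
  shows "pairwise_product k \<nu>1 \<nu>2 (pair_pmf (map_pmf fst \<mu>) (map_pmf snd \<mu>))"
  unfolding pairwise_product_def
proof (intro allI impI)
  fix j1 j2 assume "j1 < k" "j2 < k"
  have "map_pmf (\<lambda>c. (fst c j1, snd c j2)) (pair_pmf (map_pmf fst \<mu>) (map_pmf snd \<mu>))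
      = pair_pmf (map_pmf (\<lambda>x. x j1) (map_pmf fst \<mu>)) (map_pmf (\<lambda>y. y j2) (map_pmf snd \<mu>))"
    by (simp add: case_prod_unfold flip: map_pair)
  also have "\<dots> = pair_pmf \<nu>1 \<nu>2"
    using pairwise_product_marginals[OF assms] \<open>j1 < k\<close> \<open>j2 < k\<close>
    by (simp add: pmf.map_comp o_def)
  finally show "map_pmf (\<lambda>c. (fst c j1, snd c j2)) (pair_pmf (map_pmf fst \<mu>) (map_pmf snd \<mu>))
      = pair_pmf \<nu>1 \<nu>2" .
qed

lemma map_pmf_rows_Pi_pmf:
  assumes "\<And>i. i < L \<Longrightarrow> pairwise_product k \<nu>1 \<nu>2 (p i)" "j < k" "j' < k"
  shows "map_pmf (\<lambda>Z. (row L (\<lambda>i. fst (Z i)) j, row L (\<lambda>i. snd (Z i)) j')) (Pi_pmf {..<L} d p)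
         = pair_pmf (prod_pmf L \<nu>1) (prod_pmf L \<nu>2)"
proof -
  define h where "h = (\<lambda>c::(nat \<Rightarrow> 'a) \<times> (nat \<Rightarrow> 'b). (fst c j, snd c j'))"
  define restr where "restr = (\<lambda>W::nat \<Rightarrow> 'a \<times> 'b.
                                (restrict (\<lambda>i. fst (W i)) {..<L}, restrict (\<lambda>i. snd (W i)) {..<L}))"
  define zip_columns where "zip_columns = (\<lambda>(u, v) i. if i \<in> {..<L} then (u i, v i) else h d)"
  have "map_pmf (\<lambda>Z. h \<circ> Z) (Pi_pmf {..<L} d p) = Pi_pmf {..<L} (h d) (\<lambda>i. map_pmf h (p i))"
    by (rule Pi_pmf_map[symmetric]) auto
  also have "\<dots> = Pi_pmf {..<L} (h d) (\<lambda>i. pair_pmf \<nu>1 \<nu>2)"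
    by (rule Pi_pmf_cong) (use assms in \<open>auto simp: h_def pairwise_product_def\<close>)
  also have "\<dots> = map_pmf zip_columns (pair_pmf (prod_pmf L \<nu>1) (prod_pmf L \<nu>2))"
    unfolding prod_pmf_def zip_columns_def by (rule Pi_pmf_pair_pmf) auto
  finally have h: "map_pmf (\<lambda>Z. h \<circ> Z) (Pi_pmf {..<L} d p) = \<dots>" .
  have "restr (zip_columns w) = w" if "w \<in> set_pmf (pair_pmf (prod_pmf L \<nu>1) (prod_pmf L \<nu>2))" for w
    using that by (auto simp: set_pmf_prod_pmf PiE_dflt_def restr_def zip_columns_def fun_eq_iff)
  then have "map_pmf restr (map_pmf zip_columns (pair_pmf (prod_pmf L \<nu>1) (prod_pmf L \<nu>2)))
      = pair_pmf (prod_pmf L \<nu>1) (prod_pmf L \<nu>2)"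
    unfolding pmf.map_comp by (intro pmf.map_ident_strong) simp
  moreover have "map_pmf (\<lambda>Z. (row L (\<lambda>i. fst (Z i)) j, row L (\<lambda>i. snd (Z i)) j')) (Pi_pmf {..<L} d p)
      = map_pmf restr (map_pmf (\<lambda>Z. h \<circ> Z) (Pi_pmf {..<L} d p))"
    by (simp add: pmf.map_comp o_def h_def restr_def row_def)
  ultimately show ?thesis unfolding h by simp
qed

lemma expectation_rows_Pi_pmf:
  fixes \<phi> :: "(nat \<Rightarrow> 'a) \<Rightarrow> real" and \<psi> :: "(nat \<Rightarrow> 'b) \<Rightarrow> real"
  assumes "\<And>i. i < L \<Longrightarrow> pairwise_product k \<nu>1 \<nu>2 (p i)" "j < k" "j' < k"
    and "\<And>x. \<bar>\<phi> x\<bar> \<le> B" "\<And>y. \<bar>\<psi> y\<bar> \<le> B'"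
  shows "measure_pmf.expectation (Pi_pmf {..<L} d p)
           (\<lambda>Z. \<phi> (row L (\<lambda>i. fst (Z i)) j) * \<psi> (row L (\<lambda>i. snd (Z i)) j'))
         = measure_pmf.expectation (prod_pmf L \<nu>1) \<phi> * measure_pmf.expectation (prod_pmf L \<nu>2) \<psi>"
proof -
  have "measure_pmf.expectation (Pi_pmf {..<L} d p)
          (\<lambda>Z. \<phi> (row L (\<lambda>i. fst (Z i)) j) * \<psi> (row L (\<lambda>i. snd (Z i)) j'))
      = measure_pmf.expectation
          (map_pmf (\<lambda>Z. (row L (\<lambda>i. fst (Z i)) j, row L (\<lambda>i. snd (Z i)) j')) (Pi_pmf {..<L} d p))
          (\<lambda>(x, y). \<phi> x * \<psi> y)"
    by simp
  also have "\<dots> = measure_pmf.expectation (prod_pmf L \<nu>1) \<phi> * measure_pmf.expectation (prod_pmf L \<nu>2) \<psi>"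
    using map_pmf_rows_Pi_pmf[OF assms(1-3), where d=d] expectation_pair_pmf_mult[OF assms(4,5)]
    by simp
  finally show ?thesis .
qed

definition row_product ::
    "nat \<Rightarrow> nat \<Rightarrow> ((nat \<Rightarrow> 'a) \<Rightarrow> real) \<Rightarrow> ((nat \<Rightarrow> 'b) \<Rightarrow> real)
       \<Rightarrow> (nat \<Rightarrow> (nat \<Rightarrow> 'a) \<times> (nat \<Rightarrow> 'b)) \<Rightarrow> real" where
  "row_product L k F G Z = (\<Prod>j<k. F (row L (\<lambda>i. fst (Z i)) j) * G (row L (\<lambda>i. snd (Z i)) j))"

definition row_moment :: "nat \<Rightarrow> nat \<Rightarrow> (nat \<Rightarrow> 'a) pmf \<Rightarrow> ((nat \<Rightarrow> 'a) \<Rightarrow> real) \<Rightarrow> real" where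
  "row_moment L k p F = measure_pmf.expectation (prod_pmf L p) (\<lambda>X. \<Prod>j<k. F (row L X j))"

lemma abs_row_product_le:
  assumes "\<And>x. \<bar>F x\<bar> \<le> 1" "\<And>y. \<bar>G y\<bar> \<le> 1"
  shows "\<bar>row_product L k F G Z\<bar> \<le> 1"
  unfolding row_product_def abs_prod
  by (rule prod_le_1) (auto simp: abs_mult intro!: mult_le_one assms)

lemma row_product_fun_upd:
  assumes "t < L"
  shows "row_product L k F G (Z(t := c))
    = (\<Prod>j<k. F ((row L (\<lambda>i. fst (Z i)) j)(t := fst c j)) * G ((row L (\<lambda>i. snd (Z i)) j)(t := snd c j)))"
proof -
  have "(\<lambda>i. fst ((Z(t := c)) i)) = (\<lambda>i. fst (Z i))(t := fst c)"
    "(\<lambda>i. snd ((Z(t := c)) i)) = (\<lambda>i. snd (Z i))(t := snd c)"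
    by (simp_all add: fun_eq_iff)
  then show ?thesis using assms by (simp add: row_product_def row_fun_upd)
qed

lemma expectation_row_product_pair_pmf:
  fixes F :: "(nat \<Rightarrow> 'a) \<Rightarrow> real" and G :: "(nat \<Rightarrow> 'b) \<Rightarrow> real"
  assumes "\<And>x. \<bar>F x\<bar> \<le> 1" "\<And>y. \<bar>G y\<bar> \<le> 1"
  shows "measure_pmf.expectation (prod_pmf L (pair_pmf p q)) (row_product L k F G)
           = row_moment L k p F * row_moment L k q G"
proof -
  define zip_columns :: "(nat \<Rightarrow> nat \<Rightarrow> 'a) \<times> (nat \<Rightarrow> nat \<Rightarrow> 'b) \<Rightarrow> nat \<Rightarrow> (nat \<Rightarrow> 'a) \<times> (nat \<Rightarrow> 'b)"
    where "zip_columns = (\<lambda>(u, v) i. if i \<in> {..<L} then (u i, v i) else undefined)"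
  have "prod_pmf L (pair_pmf p q) = map_pmf zip_columns (pair_pmf (prod_pmf L p) (prod_pmf L q))"
    unfolding prod_pmf_def zip_columns_def by (rule Pi_pmf_pair_pmf) simp
  moreover have "row_product L k F G (zip_columns w)
      = (\<lambda>(u, v). (\<Prod>j<k. F (row L u j)) * (\<Prod>j<k. G (row L v j))) w" for w
    by (cases w) (simp add: row_product_def zip_columns_def row_def restrict_def prod.distrib cong: if_cong)
  ultimately have "measure_pmf.expectation (prod_pmf L (pair_pmf p q)) (row_product L k F G)
      = measure_pmf.expectation (pair_pmf (prod_pmf L p) (prod_pmf L q))
          (\<lambda>(u, v). (\<Prod>j<k. F (row L u j)) * (\<Prod>j<k. G (row L v j)))"
    by simp
  also have "\<dots> = row_moment L k p F * row_moment L k q G"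
    unfolding row_moment_def
    by (rule expectation_pair_pmf_mult[where B=1 and B'=1])
       (auto simp: abs_prod intro!: prod_le_1 assms)
  finally show ?thesis .
qed

section \<open>Second-order expansion of a product\<close>

definition prod_linear_part :: "nat \<Rightarrow> (nat \<Rightarrow> real) \<Rightarrow> (nat \<Rightarrow> real) \<Rightarrow> real" where
  "prod_linear_part k u m = (\<Sum>i<k. (u i - m i) * (\<Prod>l\<in>{..<k} - {i}. m l))"

lemma prod_linear_part_Suc:
  "prod_linear_part (Suc k) u m = prod_linear_part k u m * m k + (u k - m k) * (\<Prod>l<k. m l)"
proof -
  have "{..<Suc k} - {i} = insert k ({..<k} - {i})" if "i < k" for i
    using that by auto
  then have "(\<Sum>i<k. (u i - m i) * (\<Prod>l\<in>{..<Suc k} - {i}. m l))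
      = (\<Sum>i<k. (u i - m i) * (\<Prod>l\<in>{..<k} - {i}. m l) * m k)"
    by (intro sum.cong) (simp_all add: mult_ac)
  moreover have "{..<Suc k} - {k} = {..<k}" by auto
  ultimately show ?thesis
    by (simp add: prod_linear_part_def sum_distrib_right)
qed

lemma abs_prod_linear_part_le:
  assumes "\<And>j. j < k \<Longrightarrow> \<bar>m j\<bar> \<le> 1"
  shows "\<bar>prod_linear_part k u m\<bar> \<le> (\<Sum>j<k. \<bar>u j - m j\<bar>)"
proof -
  have "\<bar>prod_linear_part k u m\<bar> \<le> (\<Sum>i<k. \<bar>u i - m i\<bar> * \<bar>\<Prod>l\<in>{..<k} - {i}. m l\<bar>)"
    unfolding prod_linear_part_def abs_mult[symmetric] by (rule sum_abs)
  also have "\<dots> \<le> (\<Sum>i<k. \<bar>u i - m i\<bar>)"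
    using assms by (intro sum_mono mult_right_le_one_le) (auto simp: abs_prod intro!: prod_le_1 prod_nonneg)
  finally show ?thesis .
qed

lemma abs_prod_minus_linear_part_le:
  assumes "\<And>j. j < k \<Longrightarrow> \<bar>u j\<bar> \<le> 1" "\<And>j. j < k \<Longrightarrow> \<bar>m j\<bar> \<le> 1"
  shows "\<bar>(\<Prod>j<k. u j) - (\<Prod>j<k. m j) - prod_linear_part k u m\<bar> \<le> (\<Sum>j<k. \<bar>u j - m j\<bar>)\<^sup>2"
  using assms
proof (induction k)
  case (Suc k)
  define A where "A = (\<Sum>j<k. \<bar>u j - m j\<bar>)"
  define E where "E = (\<Prod>j<k. u j) - (\<Prod>j<k. m j) - prod_linear_part k u m"
  define d where "d = u k - m k"
  have "A \<ge> 0" by (simp add: A_def sum_nonneg)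
  have E: "\<bar>E\<bar> \<le> A\<^sup>2" and lin: "\<bar>prod_linear_part k u m\<bar> \<le> A"
    using Suc abs_prod_linear_part_le[of k m u] by (simp_all add: A_def E_def)
  have "(\<Prod>j<Suc k. u j) - (\<Prod>j<Suc k. m j) - prod_linear_part (Suc k) u m
      = E * u k + prod_linear_part k u m * d"
    by (simp add: prod_linear_part_Suc E_def d_def algebra_simps)
  also have "\<bar>\<dots>\<bar> \<le> A\<^sup>2 * 1 + A * \<bar>d\<bar>"
  proof (rule abs_triangle_ineq[THEN order_trans], rule add_mono)
    show "\<bar>E * u k\<bar> \<le> A\<^sup>2 * 1"
      unfolding abs_mult using E Suc.prems(1)[of k] by (intro mult_mono) auto
    show "\<bar>prod_linear_part k u m * d\<bar> \<le> A * \<bar>d\<bar>"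
      unfolding abs_mult using lin by (intro mult_right_mono) auto
  qed
  also have "\<dots> \<le> (A + \<bar>d\<bar>)\<^sup>2"
    using \<open>A \<ge> 0\<close> by (simp add: power2_eq_square algebra_simps)
  finally show ?case by (simp add: A_def d_def)
qed (simp add: prod_linear_part_def)

lemma mult_le_weighted_squares:
  fixes x y l :: real
  assumes "l > 0"
  shows "x * y \<le> (l * x\<^sup>2 + y\<^sup>2 / l) / 2"
proof -
  have "0 \<le> (l * x - y)\<^sup>2 / l" using assms by simp
  also have "(l * x - y)\<^sup>2 / l = l * x\<^sup>2 - 2 * x * y + y\<^sup>2 / l"
    using assms by (simp add: power2_eq_square field_simps)
  finally show ?thesis by simp
qed

lemma sum_abs_mult_sq_le_weighted:
  fixes a b :: "nat \<Rightarrow> real" and l :: real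
  assumes "l > 0"
  shows "(\<Sum>i<k. \<bar>a i\<bar>) * (\<Sum>r<k. \<bar>b r\<bar>)\<^sup>2 \<le>
    (l * real k ^ 2 * (\<Sum>i<k. \<Sum>r<k. (a i)\<^sup>2 * (b r)\<^sup>2) + real k * (\<Sum>r<k. (b r)\<^sup>2) / l) / 2"
proof -
  define A where "A = (\<Sum>i<k. \<bar>a i\<bar>)"
  define B where "B = (\<Sum>r<k. \<bar>b r\<bar>)"
  have A2: "A\<^sup>2 \<le> real k * (\<Sum>i<k. (a i)\<^sup>2)"
    using sum_squared_le_sum_of_squares[of "\<lambda>i. \<bar>a i\<bar>" "{..<k}"]
    unfolding A_def by (simp add: mult.commute)
  have B2: "B\<^sup>2 \<le> real k * (\<Sum>i<k. (b i)\<^sup>2)"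
    using sum_squared_le_sum_of_squares[of "\<lambda>i. \<bar>b i\<bar>" "{..<k}"]
    unfolding B_def by (simp add: mult.commute)
  have "(A * B)\<^sup>2 = A\<^sup>2 * B\<^sup>2" by (simp add: power_mult_distrib)
  also have "\<dots> \<le> (real k * (\<Sum>i<k. (a i)\<^sup>2)) * (real k * (\<Sum>i<k. (b i)\<^sup>2))"
    by (intro mult_mono A2 B2) (auto intro!: sum_nonneg mult_nonneg_nonneg)
  also have "\<dots> = real k ^ 2 * (\<Sum>i<k. \<Sum>r<k. (a i)\<^sup>2 * (b r)\<^sup>2)"
    by (simp add: power2_eq_square sum_product algebra_simps)
  finally have AB2: "(A * B)\<^sup>2 \<le> \<dots>" .
  have "A * B\<^sup>2 = (A * B) * B" by (simp add: power2_eq_square)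
  also have "\<dots> \<le> (l * (A * B)\<^sup>2 + B\<^sup>2 / l) / 2" by (rule mult_le_weighted_squares[OF assms])
  also have "\<dots> \<le> (l * (real k ^ 2 * (\<Sum>i<k. \<Sum>r<k. (a i)\<^sup>2 * (b r)\<^sup>2))
                   + real k * (\<Sum>r<k. (b r)\<^sup>2) / l) / 2"
    using assms AB2 B2 by (intro divide_right_mono add_mono mult_left_mono) auto
  finally show ?thesis unfolding A_def B_def by (simp add: mult.assoc)
qed

section \<open>Swapping the coupling of one column\<close>

text \<open>
  Given the other columns, the integrand is \<open>P x * Q y\<close> in the swapped column \<open>(x, y)\<close>.
  \<open>P0 + P1 x\<close> is the first-order expansion of \<open>P x\<close> around the means, \<open>Q0 + Q1 y\<close> that of
  \<open>Q y\<close>, and \<open>R\<close> collects the terms of \<open>P x * Q y\<close> of order at least three.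
\<close>

locale bounded_row_factors =
  fixes k :: nat and \<nu>1 :: "'a pmf" and \<nu>2 :: "'b pmf"
    and f :: "nat \<Rightarrow> 'a \<Rightarrow> real" and g :: "nat \<Rightarrow> 'b \<Rightarrow> real"
  assumes f_bounded: "\<And>j a. \<bar>f j a\<bar> \<le> 1" and g_bounded: "\<And>j b. \<bar>g j b\<bar> \<le> 1"
begin

definition "mean1 j = measure_pmf.expectation \<nu>1 (f j)"
definition "mean2 j = measure_pmf.expectation \<nu>2 (g j)"
definition "dev1 j a = f j a - mean1 j"
definition "dev2 j b = g j b - mean2 j"
definition "var1 j = measure_pmf.variance \<nu>1 (f j)"
definition "var2 j = measure_pmf.variance \<nu>2 (g j)"

definition "P x = (\<Prod>j<k. f j (x j))"
definition "Q y = (\<Prod>j<k. g j (y j))"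
definition "P0 = (\<Prod>j<k. mean1 j)"
definition "Q0 = (\<Prod>j<k. mean2 j)"
definition "P1 x = prod_linear_part k (\<lambda>j. f j (x j)) mean1"
definition "Q1 y = prod_linear_part k (\<lambda>j. g j (y j)) mean2"
definition "A x = (\<Sum>j<k. \<bar>dev1 j (x j)\<bar>)"
definition "B y = (\<Sum>j<k. \<bar>dev2 j (y j)\<bar>)"
definition "R c = P1 (fst c) * (Q (snd c) - Q0 - Q1 (snd c))
                  + (P (fst c) - P0 - P1 (fst c)) * (Q (snd c) - Q0)"

lemma abs_mean1_le: "\<bar>mean1 j\<bar> \<le> 1"
  unfolding mean1_def by (rule abs_expectation_pmf_le) (rule f_bounded)

lemma abs_mean2_le: "\<bar>mean2 j\<bar> \<le> 1"
  unfolding mean2_def by (rule abs_expectation_pmf_le) (rule g_bounded)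

lemma abs_dev1_le: "\<bar>dev1 j a\<bar> \<le> 2"
  unfolding dev1_def using f_bounded[of j a] abs_mean1_le[of j] by linarith

lemma abs_dev2_le: "\<bar>dev2 j b\<bar> \<le> 2"
  unfolding dev2_def using g_bounded[of j b] abs_mean2_le[of j] by linarith

lemma dev1_sq_le: "(dev1 j a)\<^sup>2 \<le> 4"
  using power_mono[OF abs_dev1_le[of j a], of 2] by simp

lemma dev2_sq_le: "(dev2 j b)\<^sup>2 \<le> 4"
  using power_mono[OF abs_dev2_le[of j b], of 2] by simp

lemma P_expansion:
  "\<bar>P x - P0\<bar> \<le> A x" "\<bar>P1 x\<bar> \<le> A x" "\<bar>P x - P0 - P1 x\<bar> \<le> (A x)\<^sup>2"
  using norm_prod_diff[where I="{..<k}" and z="\<lambda>j. f j (x j)" and w=mean1]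
    abs_prod_linear_part_le[of k mean1 "\<lambda>j. f j (x j)"]
    abs_prod_minus_linear_part_le[of k "\<lambda>j. f j (x j)" mean1]
  by (simp_all add: f_bounded abs_mean1_le P_def P0_def P1_def A_def dev1_def)

lemma Q_expansion:
  "\<bar>Q y - Q0\<bar> \<le> B y" "\<bar>Q1 y\<bar> \<le> B y" "\<bar>Q y - Q0 - Q1 y\<bar> \<le> (B y)\<^sup>2"
  using norm_prod_diff[where I="{..<k}" and z="\<lambda>j. g j (y j)" and w=mean2]
    abs_prod_linear_part_le[of k mean2 "\<lambda>j. g j (y j)"]
    abs_prod_minus_linear_part_le[of k "\<lambda>j. g j (y j)" mean2]
  by (simp_all add: g_bounded abs_mean2_le Q_def Q0_def Q1_def B_def dev2_def)

lemma A_bounds: "0 \<le> A x" "A x \<le> 2 * real k"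
proof -
  show "0 \<le> A x" unfolding A_def by (auto intro: sum_nonneg)
  have "A x \<le> (\<Sum>j<k. 2)" unfolding A_def by (intro sum_mono abs_dev1_le)
  then show "A x \<le> 2 * real k" by simp
qed

lemma B_bounds: "0 \<le> B y" "B y \<le> 2 * real k"
proof -
  show "0 \<le> B y" unfolding B_def by (auto intro: sum_nonneg)
  have "B y \<le> (\<Sum>j<k. 2)" unfolding B_def by (intro sum_mono abs_dev2_le)
  then show "B y \<le> 2 * real k" by simp
qed

lemma abs_R_le: "\<bar>R c\<bar> \<le> A (fst c) * (B (snd c))\<^sup>2 + B (snd c) * (A (fst c))\<^sup>2"
proof -
  have "\<bar>P1 (fst c) * (Q (snd c) - Q0 - Q1 (snd c))\<bar> \<le> A (fst c) * (B (snd c))\<^sup>2"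
    unfolding abs_mult by (intro mult_mono P_expansion Q_expansion) (auto simp: A_bounds)
  moreover have "\<bar>(P (fst c) - P0 - P1 (fst c)) * (Q (snd c) - Q0)\<bar> \<le> (A (fst c))\<^sup>2 * B (snd c)"
    unfolding abs_mult by (intro mult_mono P_expansion Q_expansion) (auto simp: B_bounds)
  ultimately show ?thesis
    unfolding R_def mult.commute[of "B (snd c)"]
    by (intro abs_triangle_ineq[THEN order_trans] add_mono)
qed

lemma abs_R_le_const: "\<bar>R c\<bar> \<le> 16 * real k ^ 3"
proof -
  have "A (fst c) * (B (snd c))\<^sup>2 \<le> (2 * real k) * (2 * real k)\<^sup>2"
    by (intro mult_mono power_mono A_bounds B_bounds) (auto simp: A_bounds B_bounds)
  moreover have "B (snd c) * (A (fst c))\<^sup>2 \<le> (2 * real k) * (2 * real k)\<^sup>2"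
    by (intro mult_mono power_mono A_bounds B_bounds) (auto simp: A_bounds B_bounds)
  ultimately show ?thesis using abs_R_le[of c] by (simp add: power2_eq_square power3_eq_cube)
qed

lemma abs_R_le_weighted:
  assumes "l > 0"
  shows "\<bar>R c\<bar> \<le> l * real k ^ 2 * (\<Sum>i<k. \<Sum>r<k. (dev1 i (fst c i))\<^sup>2 * (dev2 r (snd c r))\<^sup>2)
           + real k * ((\<Sum>i<k. (dev1 i (fst c i))\<^sup>2) + (\<Sum>r<k. (dev2 r (snd c r))\<^sup>2)) / (2 * l)"
proof -
  define a where "a i = dev1 i (fst c i)" for i
  define b where "b i = dev2 i (snd c i)" for i
  define S where "S = (\<Sum>i<k. \<Sum>r<k. (a i)\<^sup>2 * (b r)\<^sup>2)"
  have swap: "(\<Sum>i<k. \<Sum>r<k. (b i)\<^sup>2 * (a r)\<^sup>2) = S"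
    unfolding S_def by (subst sum.swap) (simp add: mult.commute)
  have AB: "A (fst c) = (\<Sum>i<k. \<bar>a i\<bar>)" "B (snd c) = (\<Sum>i<k. \<bar>b i\<bar>)"
    by (simp_all add: A_def B_def a_def b_def)
  have "A (fst c) * (B (snd c))\<^sup>2 + B (snd c) * (A (fst c))\<^sup>2
      \<le> (l * real k ^ 2 * S + real k * (\<Sum>r<k. (b r)\<^sup>2) / l) / 2
        + (l * real k ^ 2 * S + real k * (\<Sum>r<k. (a r)\<^sup>2) / l) / 2"
    using sum_abs_mult_sq_le_weighted[OF assms, where k=k and a=a and b=b, folded S_def]
      sum_abs_mult_sq_le_weighted[OF assms, where k=k and a=b and b=a, unfolded swap]
    unfolding AB by linarith
  also have "\<dots> = l * real k ^ 2 * S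
                   + real k * ((\<Sum>i<k. (a i)\<^sup>2) + (\<Sum>r<k. (b r)\<^sup>2)) / (2 * l)"
    using assms by (simp add: field_simps)
  finally show ?thesis
    using abs_R_le[of c] unfolding S_def a_def b_def by linarith
qed

lemma integrable_dev_products:
  fixes \<rho> :: "((nat \<Rightarrow> 'a) \<times> (nat \<Rightarrow> 'b)) pmf"
  shows "integrable \<rho> (\<lambda>c. dev1 i (fst c i) * dev2 r (snd c r))"
    and "integrable \<rho> (\<lambda>c. (dev1 i (fst c i))\<^sup>2 * (dev2 r (snd c r))\<^sup>2)"
    and "integrable \<rho> (\<lambda>c. (dev1 i (fst c i))\<^sup>2)"
    and "integrable \<rho> (\<lambda>c. (dev2 r (snd c r))\<^sup>2)"
proof -
  have "\<bar>dev1 i a * dev2 r b\<bar> \<le> 2 * 2" for a b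
    unfolding abs_mult by (intro mult_mono abs_dev1_le abs_dev2_le) auto
  then show "integrable \<rho> (\<lambda>c. dev1 i (fst c i) * dev2 r (snd c r))"
    by (intro integrable_measure_pmf_bounded)
  have "\<bar>(dev1 i a)\<^sup>2 * (dev2 r b)\<^sup>2\<bar> \<le> 4 * 4" for a b
    unfolding abs_mult by (intro mult_mono) (auto simp: dev1_sq_le dev2_sq_le)
  then show "integrable \<rho> (\<lambda>c. (dev1 i (fst c i))\<^sup>2 * (dev2 r (snd c r))\<^sup>2)"
    by (intro integrable_measure_pmf_bounded)
qed (auto intro!: integrable_measure_pmf_bounded[where B=4] dev1_sq_le dev2_sq_le)

lemma expectation_dev1: "measure_pmf.expectation \<nu>1 (dev1 i) = 0"
  unfolding dev1_def[abs_def] mean1_def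
  by (subst Bochner_Integration.integral_diff)
     (auto intro: integrable_measure_pmf_bounded[where B=1] f_bounded)

lemma expectation_cross_pair:
  fixes h :: "'a \<times> 'b \<Rightarrow> real"
  assumes "pairwise_product k \<nu>1 \<nu>2 \<rho>" "i < k" "r < k"
  shows "measure_pmf.expectation \<rho> (\<lambda>c. h (fst c i, snd c r))
           = measure_pmf.expectation (pair_pmf \<nu>1 \<nu>2) h"
proof -
  have "measure_pmf.expectation \<rho> (\<lambda>c. h (fst c i, snd c r)) =
        measure_pmf.expectation (map_pmf (\<lambda>c. (fst c i, snd c r)) \<rho>) h" by simp
  also have "map_pmf (\<lambda>c. (fst c i, snd c r)) \<rho> = pair_pmf \<nu>1 \<nu>2"
    using assms unfolding pairwise_product_def by auto
  finally show ?thesis .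
qed

lemma expectation_dev_mult:
  assumes "pairwise_product k \<nu>1 \<nu>2 \<rho>" "i < k" "r < k"
  shows "measure_pmf.expectation \<rho> (\<lambda>c. dev1 i (fst c i) * dev2 r (snd c r)) = 0"
  using expectation_cross_pair[OF assms, of "\<lambda>(a, b). dev1 i a * dev2 r b"]
    expectation_pair_pmf_mult[OF abs_dev1_le[of i] abs_dev2_le[of r], where M=\<nu>1 and N=\<nu>2]
  by (simp add: expectation_dev1)

lemma expectation_dev_sq_mult:
  assumes "pairwise_product k \<nu>1 \<nu>2 \<rho>" "i < k" "r < k"
  shows "measure_pmf.expectation \<rho> (\<lambda>c. (dev1 i (fst c i))\<^sup>2 * (dev2 r (snd c r))\<^sup>2)
           = var1 i * var2 r"
proof -
  have "\<bar>(dev1 i a)\<^sup>2\<bar> \<le> 4" "\<bar>(dev2 r b)\<^sup>2\<bar> \<le> 4" for a b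
    by (simp_all add: dev1_sq_le dev2_sq_le)
  then show ?thesis
    using expectation_cross_pair[OF assms, of "\<lambda>(a, b). (dev1 i a)\<^sup>2 * (dev2 r b)\<^sup>2"]
      expectation_pair_pmf_mult[where f="\<lambda>a. (dev1 i a)\<^sup>2" and B=4 and g="\<lambda>b. (dev2 r b)\<^sup>2"
        and B'=4 and M=\<nu>1 and N=\<nu>2]
    by (simp add: var1_def var2_def dev1_def[abs_def] dev2_def[abs_def] mean1_def mean2_def)
qed

lemma expectation_dev1_sq:
  assumes "pairwise_product k \<nu>1 \<nu>2 \<rho>" "i < k"
  shows "measure_pmf.expectation \<rho> (\<lambda>c. (dev1 i (fst c i))\<^sup>2) = var1 i"
proof -
  have "measure_pmf.expectation \<rho> (\<lambda>c. (dev1 i (fst c i))\<^sup>2)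
      = measure_pmf.expectation (pair_pmf \<nu>1 \<nu>2) (\<lambda>x. (dev1 i (fst x))\<^sup>2)"
    using expectation_cross_pair[OF assms assms(2), of "\<lambda>x. (dev1 i (fst x))\<^sup>2"] by simp
  also have "\<dots> = measure_pmf.expectation \<nu>1 (\<lambda>a. (dev1 i a)\<^sup>2)"
    by (rule expectation_pair_pmf_fst)
  finally show ?thesis by (simp add: var1_def dev1_def[abs_def] mean1_def)
qed

lemma expectation_dev2_sq:
  assumes "pairwise_product k \<nu>1 \<nu>2 \<rho>" "i < k"
  shows "measure_pmf.expectation \<rho> (\<lambda>c. (dev2 i (snd c i))\<^sup>2) = var2 i"
proof -
  have "measure_pmf.expectation \<rho> (\<lambda>c. (dev2 i (snd c i))\<^sup>2)
      = measure_pmf.expectation (pair_pmf \<nu>1 \<nu>2) (\<lambda>x. (dev2 i (snd x))\<^sup>2)"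
    using expectation_cross_pair[OF assms assms(2), of "\<lambda>x. (dev2 i (snd x))\<^sup>2"] by simp
  also have "\<dots> = measure_pmf.expectation \<nu>2 (\<lambda>a. (dev2 i a)\<^sup>2)"
    by (rule expectation_pair_pmf_snd)
  finally show ?thesis by (simp add: var2_def dev2_def[abs_def] mean2_def)
qed

text \<open>This is where pairwise independence is used.\<close>

lemma expectation_P1_Q1:
  assumes "pairwise_product k \<nu>1 \<nu>2 \<rho>"
  shows "measure_pmf.expectation \<rho> (\<lambda>c. P1 (fst c) * Q1 (snd c)) = 0"
proof -
  define \<alpha> where "\<alpha> i = (\<Prod>l\<in>{..<k} - {i}. mean1 l)" for i
  define \<beta> where "\<beta> i = (\<Prod>l\<in>{..<k} - {i}. mean2 l)" for i
  have P1Q1: "(\<lambda>c. P1 (fst c) * Q1 (snd c))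
      = (\<lambda>c. \<Sum>i<k. \<Sum>r<k. (\<alpha> i * \<beta> r) * (dev1 i (fst c i) * dev2 r (snd c r)))"
    by (simp add: fun_eq_iff P1_def Q1_def prod_linear_part_def dev1_def dev2_def
        sum_product mult_ac \<alpha>_def \<beta>_def)
  have "measure_pmf.expectation \<rho> (\<lambda>c. P1 (fst c) * Q1 (snd c))
      = (\<Sum>i<k. \<Sum>r<k. (\<alpha> i * \<beta> r)
           * measure_pmf.expectation \<rho> (\<lambda>c. dev1 i (fst c i) * dev2 r (snd c r)))"
    unfolding P1Q1
    by (simp add: Bochner_Integration.integral_sum integrable_sum integrable_dev_products)
  also have "\<dots> = 0"
    using assms by (simp add: expectation_dev_mult)
  finally show ?thesis .
qed

lemma abs_expectation_R_le:
  assumes "pairwise_product k \<nu>1 \<nu>2 \<rho>" "l > 0"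
  shows "\<bar>measure_pmf.expectation \<rho> R\<bar>
           \<le> l * real k ^ 2 * (\<Sum>i<k. \<Sum>r<k. var1 i * var2 r)
             + real k * ((\<Sum>i<k. var1 i) + (\<Sum>r<k. var2 r)) / (2 * l)"
proof -
  define T where "T c = l * real k ^ 2 * (\<Sum>i<k. \<Sum>r<k. (dev1 i (fst c i))\<^sup>2 * (dev2 r (snd c r))\<^sup>2)
           + real k * ((\<Sum>i<k. (dev1 i (fst c i))\<^sup>2) + (\<Sum>r<k. (dev2 r (snd c r))\<^sup>2)) / (2 * l)" for c
  have "integrable \<rho> R"
    by (rule integrable_measure_pmf_bounded) (rule abs_R_le_const)
  moreover have "integrable \<rho> T"
    unfolding T_def by (simp add: integrable_sum integrable_dev_products)
  ultimately have "\<bar>measure_pmf.expectation \<rho> R\<bar> \<le> measure_pmf.expectation \<rho> T"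
    using abs_R_le_weighted[OF assms(2)]
    by (intro integral_abs_bound[THEN order_trans] integral_mono) (auto simp: T_def)
  also have "\<dots> = l * real k ^ 2 * (\<Sum>i<k. \<Sum>r<k.
        measure_pmf.expectation \<rho> (\<lambda>c. (dev1 i (fst c i))\<^sup>2 * (dev2 r (snd c r))\<^sup>2))
      + real k * ((\<Sum>i<k. measure_pmf.expectation \<rho> (\<lambda>c. (dev1 i (fst c i))\<^sup>2))
                  + (\<Sum>r<k. measure_pmf.expectation \<rho> (\<lambda>c. (dev2 r (snd c r))\<^sup>2))) / (2 * l)"
    unfolding T_def
    by (simp add: Bochner_Integration.integral_sum integrable_sum integrable_dev_products)
  also have "\<dots> = l * real k ^ 2 * (\<Sum>i<k. \<Sum>r<k. var1 i * var2 r)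
                   + real k * ((\<Sum>i<k. var1 i) + (\<Sum>r<k. var2 r)) / (2 * l)"
    using assms(1) by (simp add: expectation_dev_sq_mult expectation_dev1_sq expectation_dev2_sq)
  finally show ?thesis .
qed

lemma expectation_P_Q:
  assumes "pairwise_product k \<nu>1 \<nu>2 \<rho>"
  shows "measure_pmf.expectation \<rho> (\<lambda>c. P (fst c) * Q (snd c)) =
     P0 * measure_pmf.expectation (map_pmf snd \<rho>) Q
     + Q0 * measure_pmf.expectation (map_pmf fst \<rho>) (\<lambda>x. P x - P0)
     + measure_pmf.expectation \<rho> R"
proof -
  have P: "\<bar>P x\<bar> \<le> 1" and Q: "\<bar>Q y\<bar> \<le> 1" and P0: "\<bar>P0\<bar> \<le> 1" and Q0: "\<bar>Q0\<bar> \<le> 1" for x y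
    unfolding P_def Q_def P0_def Q0_def abs_prod
    by (auto intro!: prod_le_1 f_bounded g_bounded abs_mean1_le abs_mean2_le)
  have "integrable \<rho> (\<lambda>c. P0 * Q (snd c))"
    using P0 Q by (intro integrable_measure_pmf_bounded[where B=1]) (simp add: abs_mult mult_le_one)
  moreover have "integrable \<rho> (\<lambda>c. Q0 * (P (fst c) - P0))"
  proof (rule integrable_measure_pmf_bounded[where B="1 * 2"])
    fix c :: "(nat \<Rightarrow> 'a) \<times> (nat \<Rightarrow> 'b)"
    have "\<bar>P (fst c) - P0\<bar> \<le> 2" using P[of "fst c"] P0 by linarith
    then show "\<bar>Q0 * (P (fst c) - P0)\<bar> \<le> 1 * 2"
      unfolding abs_mult using Q0 by (intro mult_mono) auto
  qed
  moreover have "integrable \<rho> (\<lambda>c. P1 (fst c) * Q1 (snd c))"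
  proof (rule integrable_measure_pmf_bounded[where B="(2 * real k) * (2 * real k)"])
    fix c :: "(nat \<Rightarrow> 'a) \<times> (nat \<Rightarrow> 'b)"
    show "\<bar>P1 (fst c) * Q1 (snd c)\<bar> \<le> (2 * real k) * (2 * real k)"
      unfolding abs_mult
      by (intro mult_mono order_trans[OF P_expansion(2) A_bounds(2)]
          order_trans[OF Q_expansion(2) B_bounds(2)]) auto
  qed
  moreover have "integrable \<rho> R"
    by (rule integrable_measure_pmf_bounded) (rule abs_R_le_const)
  moreover have "P (fst c) * Q (snd c)
      = P0 * Q (snd c) + Q0 * (P (fst c) - P0) + P1 (fst c) * Q1 (snd c) + R c" for c
    unfolding R_def by (simp add: algebra_simps)
  ultimately show ?thesis
    by (simp add: Bochner_Integration.integral_add expectation_P1_Q1[OF assms])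
qed

lemma expectation_P_Q_diff:
  assumes "pairwise_product k \<nu>1 \<nu>2 \<rho>1" "pairwise_product k \<nu>1 \<nu>2 \<rho>2"
    and "map_pmf fst \<rho>1 = map_pmf fst \<rho>2" "map_pmf snd \<rho>1 = map_pmf snd \<rho>2" "l > 0"
  shows "\<bar>measure_pmf.expectation \<rho>1 (\<lambda>c. P (fst c) * Q (snd c))
          - measure_pmf.expectation \<rho>2 (\<lambda>c. P (fst c) * Q (snd c))\<bar>
     \<le> 2 * l * real k ^ 2 * (\<Sum>i<k. \<Sum>r<k. var1 i * var2 r)
       + real k * ((\<Sum>i<k. var1 i) + (\<Sum>r<k. var2 r)) / l"
proof -
  have "\<bar>measure_pmf.expectation \<rho>1 (\<lambda>c. P (fst c) * Q (snd c))
         - measure_pmf.expectation \<rho>2 (\<lambda>c. P (fst c) * Q (snd c))\<bar>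
      = \<bar>measure_pmf.expectation \<rho>1 R - measure_pmf.expectation \<rho>2 R\<bar>"
    unfolding expectation_P_Q[OF assms(1)] expectation_P_Q[OF assms(2)] assms(3,4) by simp
  also have "\<dots> \<le> \<bar>measure_pmf.expectation \<rho>1 R\<bar> + \<bar>measure_pmf.expectation \<rho>2 R\<bar>"
    by (rule abs_triangle_ineq4)
  also have "\<dots> \<le> 2 * (l * real k ^ 2 * (\<Sum>i<k. \<Sum>r<k. var1 i * var2 r)
                 + real k * ((\<Sum>i<k. var1 i) + (\<Sum>r<k. var2 r)) / (2 * l))"
    using add_mono[OF abs_expectation_R_le[OF assms(1,5)] abs_expectation_R_le[OF assms(2,5)]]
    by (simp only: mult_2)
  also have "\<dots> = 2 * l * real k ^ 2 * (\<Sum>i<k. \<Sum>r<k. var1 i * var2 r)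
                   + real k * ((\<Sum>i<k. var1 i) + (\<Sum>r<k. var2 r)) / l"
    using assms(5) by (simp add: field_simps)
  finally show ?thesis .
qed

end

lemma single_column_swap:
  fixes \<rho>1 \<rho>2 :: "((nat \<Rightarrow> 'a) \<times> (nat \<Rightarrow> 'b)) pmf"
  assumes "\<And>j a. \<bar>f j a\<bar> \<le> 1" "\<And>j b. \<bar>g j b\<bar> \<le> 1"
    and "pairwise_product k \<nu>1 \<nu>2 \<rho>1" "pairwise_product k \<nu>1 \<nu>2 \<rho>2"
    and "map_pmf fst \<rho>1 = map_pmf fst \<rho>2" "map_pmf snd \<rho>1 = map_pmf snd \<rho>2" "l > 0"
  shows "\<bar>measure_pmf.expectation \<rho>1 (\<lambda>c. \<Prod>j<k. f j (fst c j) * g j (snd c j))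
        - measure_pmf.expectation \<rho>2 (\<lambda>c. \<Prod>j<k. f j (fst c j) * g j (snd c j))\<bar>
     \<le> 2 * l * real k ^ 2 * (\<Sum>i<k. \<Sum>r<k. measure_pmf.variance \<nu>1 (f i)
                                            * measure_pmf.variance \<nu>2 (g r))
       + real k * ((\<Sum>i<k. measure_pmf.variance \<nu>1 (f i))
                   + (\<Sum>r<k. measure_pmf.variance \<nu>2 (g r))) / l"
proof -
  interpret bounded_row_factors k \<nu>1 \<nu>2 f g
    using assms(1,2) by unfold_locales
  from expectation_P_Q_diff[OF assms(3-7)] show ?thesis
    by (simp add: P_def Q_def var1_def var2_def prod.distrib)
qed

section \<open>The hybrid argument\<close>

lemma influence_nonneg: "influence \<nu> L F i \<ge> 0"
  unfolding influence_def by (intro Bochner_Integration.integral_nonneg) simp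

definition coordinate_variance :: "'a pmf \<Rightarrow> nat \<Rightarrow> ((nat \<Rightarrow> 'a) \<Rightarrow> real) \<Rightarrow> (nat \<Rightarrow> 'a) \<Rightarrow> real"
  where "coordinate_variance \<nu> t F x = measure_pmf.variance \<nu> (\<lambda>a. F (x(t := a)))"

lemma influence_eq_expectation_coordinate_variance:
  "influence \<nu> L F t = measure_pmf.expectation (prod_pmf L \<nu>) (coordinate_variance \<nu> t F)"
  by (simp add: influence_def coordinate_variance_def[abs_def])

lemma abs_coordinate_variance_le:
  assumes "\<And>x. \<bar>F x\<bar> \<le> 1"
  shows "\<bar>coordinate_variance \<nu> t F x\<bar> \<le> 4"
  using variance_pmf_bounds[of "\<lambda>a. F (x(t := a))"] assms
  unfolding coordinate_variance_def by simp

lemma expectation_coordinate_variances_rows: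
  fixes L t :: nat and l :: real and q :: "nat \<Rightarrow> ((nat \<Rightarrow> 'a) \<times> (nat \<Rightarrow> 'b)) pmf"
    and F :: "(nat \<Rightarrow> 'a) \<Rightarrow> real" and G :: "(nat \<Rightarrow> 'b) \<Rightarrow> real"
  assumes F: "\<And>x. \<bar>F x\<bar> \<le> 1" and G: "\<And>y. \<bar>G y\<bar> \<le> 1"
    and q: "\<And>i. pairwise_product k \<nu>1 \<nu>2 (q i)"
  defines "bound Z \<equiv> 2 * l * real k ^ 2 * (\<Sum>j<k. \<Sum>r<k.
              coordinate_variance \<nu>1 t F (row L (\<lambda>i. fst (Z i)) j)
              * coordinate_variance \<nu>2 t G (row L (\<lambda>i. snd (Z i)) r))
            + real k * ((\<Sum>j<k. coordinate_variance \<nu>1 t F (row L (\<lambda>i. fst (Z i)) j))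
                        + (\<Sum>r<k. coordinate_variance \<nu>2 t G (row L (\<lambda>i. snd (Z i)) r))) / l"
  shows "integrable (Pi_pmf {..<L} undefined q) bound"
    and "measure_pmf.expectation (Pi_pmf {..<L} undefined q) bound
       = 2 * l * real k ^ 4 * (influence \<nu>1 L F t * influence \<nu>2 L G t)
         + real k ^ 2 * (influence \<nu>1 L F t + influence \<nu>2 L G t) / l"
proof -
  define M where "M = Pi_pmf {..<L} undefined q"
  define vF where "vF Z j = coordinate_variance \<nu>1 t F (row L (\<lambda>i. fst (Z i)) j)"
    for Z :: "nat \<Rightarrow> (nat \<Rightarrow> 'a) \<times> (nat \<Rightarrow> 'b)" and j
  define vG where "vG Z j = coordinate_variance \<nu>2 t G (row L (\<lambda>i. snd (Z i)) j)"
    for Z :: "nat \<Rightarrow> (nat \<Rightarrow> 'a) \<times> (nat \<Rightarrow> 'b)" and j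
  have bound: "bound = (\<lambda>Z. 2 * l * real k ^ 2 * (\<Sum>j<k. \<Sum>r<k. vF Z j * vG Z r)
                + real k * ((\<Sum>j<k. vF Z j) + (\<Sum>r<k. vG Z r)) / l)"
    by (simp add: bound_def vF_def vG_def fun_eq_iff)
  have cvF: "\<bar>coordinate_variance \<nu>1 t F x\<bar> \<le> 4" and cvG: "\<bar>coordinate_variance \<nu>2 t G y\<bar> \<le> 4"
    for x y
    using abs_coordinate_variance_le[where F=F, OF F] abs_coordinate_variance_le[where F=G, OF G]
    by auto
  then have vF: "\<bar>vF Z j\<bar> \<le> 4" and vG: "\<bar>vG Z j\<bar> \<le> 4" for Z j
    unfolding vF_def vG_def by auto
  have vFG: "\<bar>vF Z j * vG Z r\<bar> \<le> 4 * 4" for Z j r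
    unfolding abs_mult using vF vG by (intro mult_mono) auto
  have "integrable M (\<lambda>Z. vF Z j * vG Z r)" "integrable M (\<lambda>Z. vF Z j)" "integrable M (\<lambda>Z. vG Z r)"
    for j r
    by (rule integrable_measure_pmf_bounded, rule vFG vF vG)+
  then show "integrable (Pi_pmf {..<L} undefined q) bound"
    unfolding M_def bound by (simp add: integrable_sum)
  from \<open>\<And>j r. integrable M (\<lambda>Z. vF Z j * vG Z r)\<close> \<open>\<And>j. integrable M (\<lambda>Z. vF Z j)\<close>
    \<open>\<And>r. integrable M (\<lambda>Z. vG Z r)\<close>
  have "measure_pmf.expectation M bound
      = 2 * l * real k ^ 2 * (\<Sum>j<k. \<Sum>r<k. measure_pmf.expectation M (\<lambda>Z. vF Z j * vG Z r))
        + real k * ((\<Sum>j<k. measure_pmf.expectation M (\<lambda>Z. vF Z j))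
                    + (\<Sum>r<k. measure_pmf.expectation M (\<lambda>Z. vG Z r))) / l"
    unfolding bound by (simp add: Bochner_Integration.integral_sum integrable_sum)
  also have "\<dots> = 2 * l * real k ^ 2 * (real k * real k * (influence \<nu>1 L F t * influence \<nu>2 L G t))
        + real k * (real k * influence \<nu>1 L F t + real k * influence \<nu>2 L G t) / l"
  proof -
    have "measure_pmf.expectation M (\<lambda>Z. vF Z j * vG Z r)
        = influence \<nu>1 L F t * influence \<nu>2 L G t" if "j < k" "r < k" for j r
      unfolding M_def vF_def vG_def influence_eq_expectation_coordinate_variance
      by (rule expectation_rows_Pi_pmf[where B=4 and B'=4]) (use q that cvF cvG in auto)
    moreover have "measure_pmf.expectation M (\<lambda>Z. vF Z j * 1)
        = influence \<nu>1 L F t * measure_pmf.expectation (prod_pmf L \<nu>2) (\<lambda>_. 1::real)"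
      if "j < k" for j
      unfolding M_def vF_def influence_eq_expectation_coordinate_variance
      by (rule expectation_rows_Pi_pmf[where B=4 and B'=1 and j'=j]) (use q that cvF cvG in auto)
    moreover have "measure_pmf.expectation M (\<lambda>Z. 1 * vG Z r)
        = measure_pmf.expectation (prod_pmf L \<nu>1) (\<lambda>_. 1::real) * influence \<nu>2 L G t"
      if "r < k" for r
      unfolding M_def vG_def influence_eq_expectation_coordinate_variance
      by (rule expectation_rows_Pi_pmf[where B=1 and B'=4 and j=r]) (use q that cvF cvG in auto)
    ultimately show ?thesis by simp
  qed
  also have "\<dots> = 2 * l * real k ^ 4 * (influence \<nu>1 L F t * influence \<nu>2 L G t)
        + real k ^ 2 * (influence \<nu>1 L F t + influence \<nu>2 L G t) / l"
    by (simp add: power2_eq_square power4_eq_xxxx algebra_simps)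
  finally show "measure_pmf.expectation (Pi_pmf {..<L} undefined q) bound = \<dots>"
    unfolding M_def .
qed

lemma hybrid_step:
  fixes q :: "nat \<Rightarrow> ((nat \<Rightarrow> 'a) \<times> (nat \<Rightarrow> 'b)) pmf"
    and F :: "(nat \<Rightarrow> 'a) \<Rightarrow> real" and G :: "(nat \<Rightarrow> 'b) \<Rightarrow> real"
  assumes F: "\<And>x. \<bar>F x\<bar> \<le> 1" and G: "\<And>y. \<bar>G y\<bar> \<le> 1"
    and q: "\<And>i. pairwise_product k \<nu>1 \<nu>2 (q i)"
    and \<rho>: "pairwise_product k \<nu>1 \<nu>2 \<rho>1" "pairwise_product k \<nu>1 \<nu>2 \<rho>2"
      "map_pmf fst \<rho>1 = map_pmf fst \<rho>2" "map_pmf snd \<rho>1 = map_pmf snd \<rho>2"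
    and "l > 0" "t < L"
  shows "\<bar>measure_pmf.expectation (Pi_pmf {..<L} undefined (q(t := \<rho>1))) (row_product L k F G)
          - measure_pmf.expectation (Pi_pmf {..<L} undefined (q(t := \<rho>2))) (row_product L k F G)\<bar>
     \<le> 2 * l * real k ^ 4 * (influence \<nu>1 L F t * influence \<nu>2 L G t)
       + real k ^ 2 * (influence \<nu>1 L F t + influence \<nu>2 L G t) / l"
proof -
  define M where "M = Pi_pmf {..<L} undefined q"
  define rX where "rX Z j = row L (\<lambda>i. fst (Z i)) j"
    for Z :: "nat \<Rightarrow> (nat \<Rightarrow> 'a) \<times> (nat \<Rightarrow> 'b)" and j
  define rY where "rY Z j = row L (\<lambda>i. snd (Z i)) j"
    for Z :: "nat \<Rightarrow> (nat \<Rightarrow> 'a) \<times> (nat \<Rightarrow> 'b)" and j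
  define cond where "cond \<rho> Z = measure_pmf.expectation \<rho> (\<lambda>c. row_product L k F G (Z(t := c)))"
    for \<rho> Z
  define bound where "bound Z = 2 * l * real k ^ 2 * (\<Sum>j<k. \<Sum>r<k.
          coordinate_variance \<nu>1 t F (rX Z j) * coordinate_variance \<nu>2 t G (rY Z r))
        + real k * ((\<Sum>j<k. coordinate_variance \<nu>1 t F (rX Z j))
                    + (\<Sum>r<k. coordinate_variance \<nu>2 t G (rY Z r))) / l" for Z
  have integrable_cond: "integrable M (cond \<rho>)" for \<rho>
    unfolding cond_def
    by (intro integrable_measure_pmf_bounded[where B=1] abs_expectation_pmf_le abs_row_product_le F G)
  have conditioning: "measure_pmf.expectation (Pi_pmf {..<L} undefined (q(t := \<rho>))) (row_product L k F G)
      = measure_pmf.expectation M (cond \<rho>)" for \<rho>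
    unfolding M_def cond_def using \<open>t < L\<close>
    by (intro expectation_Pi_pmf_fun_upd[where B=1] abs_row_product_le F G) auto
  have pointwise: "\<bar>cond \<rho>1 Z - cond \<rho>2 Z\<bar> \<le> bound Z" for Z
    unfolding cond_def bound_def coordinate_variance_def rX_def rY_def row_product_fun_upd[OF \<open>t < L\<close>]
    by (rule single_column_swap[where f="\<lambda>j a. F ((rX Z j)(t := a))"
          and g="\<lambda>j b. G ((rY Z j)(t := b))", OF F G \<rho> \<open>l > 0\<close>, unfolded rX_def rY_def])
  have "integrable M bound"
    unfolding M_def bound_def rX_def rY_def by (rule expectation_coordinate_variances_rows(1)[OF F G q])
  have "\<bar>measure_pmf.expectation (Pi_pmf {..<L} undefined (q(t := \<rho>1))) (row_product L k F G)
          - measure_pmf.expectation (Pi_pmf {..<L} undefined (q(t := \<rho>2))) (row_product L k F G)\<bar>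
      = \<bar>measure_pmf.expectation M (\<lambda>Z. cond \<rho>1 Z - cond \<rho>2 Z)\<bar>"
    unfolding conditioning by (simp add: Bochner_Integration.integral_diff integrable_cond)
  also have "\<dots> \<le> measure_pmf.expectation M bound"
    using pointwise \<open>integrable M bound\<close>
    by (intro integral_abs_bound[THEN order_trans] integral_mono integrable_abs
        Bochner_Integration.integrable_diff integrable_cond) auto
  also have "\<dots> = 2 * l * real k ^ 4 * (influence \<nu>1 L F t * influence \<nu>2 L G t)
       + real k ^ 2 * (influence \<nu>1 L F t + influence \<nu>2 L G t) / l"
    unfolding M_def bound_def rX_def rY_def
    by (rule expectation_coordinate_variances_rows(2)[OF F G q])
  finally show ?thesis .
qed

lemma decoupling_bound_weighted:
  fixes \<mu> :: "((nat \<Rightarrow> 'a) \<times> (nat \<Rightarrow> 'b)) pmf"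
    and F :: "(nat \<Rightarrow> 'a) \<Rightarrow> real" and G :: "(nat \<Rightarrow> 'b) \<Rightarrow> real"
  assumes \<mu>: "pairwise_product k \<nu>1 \<nu>2 \<mu>"
    and F: "\<And>x. \<bar>F x\<bar> \<le> 1" and G: "\<And>y. \<bar>G y\<bar> \<le> 1" and "l > 0"
  shows "\<bar>measure_pmf.expectation (prod_pmf L \<mu>) (row_product L k F G)
          - row_moment L k (map_pmf fst \<mu>) F * row_moment L k (map_pmf snd \<mu>) G\<bar>
     \<le> 2 * l * real k ^ 4 * (\<Sum>t<L. influence \<nu>1 L F t * influence \<nu>2 L G t)
        + real k ^ 2 * ((\<Sum>t<L. influence \<nu>1 L F t) + (\<Sum>t<L. influence \<nu>2 L G t)) / l"
proof -
  define \<pi> where "\<pi> = pair_pmf (map_pmf fst \<mu>) (map_pmf snd \<mu>)"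
  define hybrid where "hybrid t = (\<lambda>i::nat. if i < t then \<pi> else \<mu>)" for t
  define H where "H t = measure_pmf.expectation (Pi_pmf {..<L} undefined (hybrid t)) (row_product L k F G)"
    for t
  have \<pi>: "pairwise_product k \<nu>1 \<nu>2 \<pi>"
    unfolding \<pi>_def by (rule pairwise_product_decoupled[OF \<mu>])
  have H0: "H 0 = measure_pmf.expectation (prod_pmf L \<mu>) (row_product L k F G)"
    by (simp add: H_def hybrid_def prod_pmf_def)
  have "Pi_pmf {..<L} undefined (hybrid L) = prod_pmf L \<pi>"
    unfolding prod_pmf_def by (rule Pi_pmf_cong) (auto simp: hybrid_def)
  then have HL: "H L = row_moment L k (map_pmf fst \<mu>) F * row_moment L k (map_pmf snd \<mu>) G"
    unfolding H_def \<pi>_def by (simp add: expectation_row_product_pair_pmf F G)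
  have step: "\<bar>H t - H (Suc t)\<bar> \<le> 2 * l * real k ^ 4 * (influence \<nu>1 L F t * influence \<nu>2 L G t)
        + real k ^ 2 * (influence \<nu>1 L F t + influence \<nu>2 L G t) / l" if "t < L" for t
  proof -
    have upd: "(hybrid t)(t := \<mu>) = hybrid t" "(hybrid t)(t := \<pi>) = hybrid (Suc t)"
      by (auto simp: hybrid_def fun_eq_iff)
    have hyb: "pairwise_product k \<nu>1 \<nu>2 (hybrid t i)" for i
      using \<mu> \<pi> by (simp add: hybrid_def)
    have marg: "map_pmf fst \<mu> = map_pmf fst \<pi>" "map_pmf snd \<mu> = map_pmf snd \<pi>"
      by (simp_all add: \<pi>_def map_fst_pair_pmf map_snd_pair_pmf)
    from hybrid_step[where F=F and G=G and q="hybrid t", OF F G hyb \<mu> \<pi> marg \<open>l > 0\<close> \<open>t < L\<close>]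
    show ?thesis unfolding upd H_def .
  qed
  have "H 0 - H L = (\<Sum>t<L. H t - H (Suc t))"
    by (simp add: sum_lessThan_telescope')
  then have "\<bar>H 0 - H L\<bar> \<le> (\<Sum>t<L. \<bar>H t - H (Suc t)\<bar>)"
    by (simp add: sum_abs)
  also have "\<dots> \<le> (\<Sum>t<L. 2 * l * real k ^ 4 * (influence \<nu>1 L F t * influence \<nu>2 L G t)
        + real k ^ 2 * (influence \<nu>1 L F t + influence \<nu>2 L G t) / l)"
    by (intro sum_mono step) simp
  also have "\<dots> = 2 * l * real k ^ 4 * (\<Sum>t<L. influence \<nu>1 L F t * influence \<nu>2 L G t)
        + real k ^ 2 * ((\<Sum>t<L. influence \<nu>1 L F t) + (\<Sum>t<L. influence \<nu>2 L G t)) / l"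
    by (simp add: sum.distrib sum_distrib_left distrib_left add_divide_distrib
        flip: sum_divide_distrib)
  finally show ?thesis unfolding H0 HL .
qed

section \<open>Optimising the weight and the constant\<close>

lemma le_two_sqrt_mult_if_weighted_bound:
  fixes a b x :: real
  assumes "a \<ge> 0" "b \<ge> 0" and bound: "\<And>l. l > 0 \<Longrightarrow> x \<le> l * a + b / l"
  shows "x \<le> 2 * sqrt (a * b)"
proof (cases "a > 0 \<and> b > 0")
  case True
  define l where "l = sqrt b / sqrt a"
  have "l > 0" using True by (simp add: l_def)
  have "sqrt a * sqrt a = a" "sqrt b * sqrt b = b" using True by simp_all
  then have "l * a = sqrt a * sqrt b" "b / l = sqrt a * sqrt b"
    using True unfolding l_def by (simp_all add: field_simps)
  then show ?thesis using bound[OF \<open>l > 0\<close>] by (simp add: real_sqrt_mult)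
next
  case False
  then have "a * b = 0" using assms(1,2) by auto
  show ?thesis
  proof (rule ccontr)
    assume "\<not> ?thesis"
    then have "x > 0" using \<open>a * b = 0\<close> by simp
    show False
    proof (cases "a = 0")
      case True
      have "0 \<le> 2 * b / x" using \<open>x > 0\<close> assms(2) by simp
      then have "x \<le> b / (2 * b / x + 1)" using bound[of "2 * b / x + 1"] True by simp
      also have "\<dots> < x"
      proof -
        have "0 < b * x + x * x" using \<open>x > 0\<close> assms(2) by (intro add_nonneg_pos) auto
        then show ?thesis using \<open>x > 0\<close> assms(2) by (simp add: field_simps)
      qed
      finally show False by simp
    next
      case False
      then have "a > 0" "b = 0" using \<open>a * b = 0\<close> assms(1) by auto
      then show False using bound[of "x / (2 * a)"] \<open>x > 0\<close> by simp
    qed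
  qed
qed

lemma four_mult_cube_le_two_powr: "4 * real k ^ 3 \<le> 2 powr (5 * real k)"
proof (cases "k = 0")
  case False
  have "4 * k ^ 3 \<le> 2 ^ (2 * k) * (2 ^ k) ^ 3"
    using False by (intro mult_mono power_mono less_imp_le[OF less_exp])
      (auto intro: order_trans[OF _ power_increasing[of 2 "2 * k" "2::nat"]])
  also have "\<dots> = 2 ^ (5 * k)" by (simp flip: power_mult power_add)
  finally have "real (4 * k ^ 3) \<le> real ((2::nat) ^ (5 * k))" by (simp only: of_nat_le_iff)
  then show ?thesis by (simp add: powr_realpow[symmetric])
qed simp

lemma decoupling_bound:
  fixes \<mu> :: "((nat \<Rightarrow> 'a) \<times> (nat \<Rightarrow> 'b)) pmf"
    and F :: "(nat \<Rightarrow> 'a) \<Rightarrow> real" and G :: "(nat \<Rightarrow> 'b) \<Rightarrow> real"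
  assumes \<mu>: "pairwise_product k \<nu>1 \<nu>2 \<mu>"
    and F: "\<And>x. \<bar>F x\<bar> \<le> 1" and G: "\<And>y. \<bar>G y\<bar> \<le> 1"
  shows "\<bar>measure_pmf.expectation (prod_pmf L \<mu>) (row_product L k F G)
          - row_moment L k (map_pmf fst \<mu>) F * row_moment L k (map_pmf snd \<mu>) G\<bar>
     \<le> 4 * real k ^ 3 * max (sqrt (\<Sum>i<L. influence \<nu>1 L F i)) (sqrt (\<Sum>i<L. influence \<nu>2 L G i))
        * sqrt (\<Sum>i<L. influence \<nu>1 L F i * influence \<nu>2 L G i)"
proof -
  define SF where "SF = (\<Sum>i<L. influence \<nu>1 L F i)"
  define SG where "SG = (\<Sum>i<L. influence \<nu>2 L G i)"
  define SFG where "SFG = (\<Sum>i<L. influence \<nu>1 L F i * influence \<nu>2 L G i)"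
  define \<Gamma> where "\<Gamma> = max (sqrt SF) (sqrt SG)"
  have "SF \<ge> 0" "SG \<ge> 0" "SFG \<ge> 0"
    unfolding SF_def SG_def SFG_def by (auto intro!: sum_nonneg mult_nonneg_nonneg influence_nonneg)
  have "SF + SG \<le> 2 * \<Gamma>\<^sup>2"
  proof -
    have "SF \<le> \<Gamma>\<^sup>2" "SG \<le> \<Gamma>\<^sup>2"
      using \<open>SF \<ge> 0\<close> \<open>SG \<ge> 0\<close> real_sqrt_le_iff[of SF "\<Gamma>\<^sup>2"] real_sqrt_le_iff[of SG "\<Gamma>\<^sup>2"]
      unfolding \<Gamma>_def by (auto simp: max_def)
    then show ?thesis by simp
  qed
  have "\<bar>measure_pmf.expectation (prod_pmf L \<mu>) (row_product L k F G)
          - row_moment L k (map_pmf fst \<mu>) F * row_moment L k (map_pmf snd \<mu>) G\<bar>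
      \<le> 2 * sqrt ((2 * real k ^ 4 * SFG) * (real k ^ 2 * (SF + SG)))"
  proof (rule le_two_sqrt_mult_if_weighted_bound)
    fix l :: real assume "l > 0"
    from decoupling_bound_weighted[OF \<mu> F G this, of L]
    show "\<bar>measure_pmf.expectation (prod_pmf L \<mu>) (row_product L k F G)
          - row_moment L k (map_pmf fst \<mu>) F * row_moment L k (map_pmf snd \<mu>) G\<bar>
        \<le> l * (2 * real k ^ 4 * SFG) + real k ^ 2 * (SF + SG) / l"
      unfolding SF_def SG_def SFG_def by (simp only: mult_ac)
  qed (use \<open>SF \<ge> 0\<close> \<open>SG \<ge> 0\<close> \<open>SFG \<ge> 0\<close> in auto)
  also have "\<dots> \<le> 2 * (2 * real k ^ 3 * \<Gamma> * sqrt SFG)"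
  proof -
    have "(2 * real k ^ 4 * SFG) * (real k ^ 2 * (SF + SG)) \<le> (2 * real k ^ 4 * SFG) * (real k ^ 2 * (2 * \<Gamma>\<^sup>2))"
      using \<open>SF + SG \<le> 2 * \<Gamma>\<^sup>2\<close> \<open>SFG \<ge> 0\<close> by (intro mult_left_mono) auto
    also have "\<dots> = (2 * real k ^ 3 * \<Gamma> * sqrt SFG)\<^sup>2"
      using \<open>SFG \<ge> 0\<close> by (simp add: power_mult_distrib power2_eq_square power3_eq_cube power4_eq_xxxx)
    finally have "sqrt ((2 * real k ^ 4 * SFG) * (real k ^ 2 * (SF + SG)))
        \<le> sqrt ((2 * real k ^ 3 * \<Gamma> * sqrt SFG)\<^sup>2)"
      by (rule real_sqrt_le_mono)
    also have "\<dots> = 2 * real k ^ 3 * \<Gamma> * sqrt SFG"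
      using \<open>SF \<ge> 0\<close> \<open>SFG \<ge> 0\<close> by (simp add: \<Gamma>_def le_max_iff_disj)
    finally show ?thesis by linarith
  qed
  finally show ?thesis by (simp add: \<Gamma>_def SF_def SG_def SFG_def mult_ac)
qed

section \<open>Functions bounded only on the support\<close>

lemma influence_cong_PiE:
  assumes "set_pmf \<nu> \<subseteq> \<Omega>" "\<And>x. x \<in> PiE {..<L} (\<lambda>_. \<Omega>) \<Longrightarrow> F x = F' x" "t < L"
  shows "influence \<nu> L F t = influence \<nu> L F' t"
  unfolding influence_def
proof (rule expectation_pmf_cong, rule variance_pmf_cong)
  fix x a assume "x \<in> set_pmf (prod_pmf L \<nu>)" "a \<in> set_pmf \<nu>"
  then have "x(t := a) \<in> PiE {..<L} (\<lambda>_. \<Omega>)"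
    using assms(1,3) unfolding set_pmf_prod_pmf
    by (auto simp: PiE_dflt_def PiE_def Pi_def extensional_def)
  then show "F (x(t := a)) = F' (x(t := a))" by (rule assms(2))
qed

lemma row_moment_cong_PiE:
  assumes "set_pmf p \<subseteq> PiE {..<k} (\<lambda>_. \<Omega>)" "\<And>x. x \<in> PiE {..<L} (\<lambda>_. \<Omega>) \<Longrightarrow> F x = F' x"
  shows "row_moment L k p F = row_moment L k p F'"
  unfolding row_moment_def
proof (intro expectation_pmf_cong prod.cong refl)
  fix X j assume X: "X \<in> set_pmf (prod_pmf L p)" and "j \<in> {..<k}"
  have "X i \<in> PiE {..<k} (\<lambda>_. \<Omega>)" if "i < L" for i
    using X that assms(1) unfolding set_pmf_prod_pmf by (auto simp: PiE_dflt_def)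
  then show "F (row L X j) = F' (row L X j)"
    using \<open>j \<in> {..<k}\<close> by (intro assms(2) row_in_PiE) auto
qed

lemma expectation_row_product_cong_PiE:
  assumes "set_pmf \<mu> \<subseteq> PiE {..<k} (\<lambda>_. \<Omega>1) \<times> PiE {..<k} (\<lambda>_. \<Omega>2)"
    and "\<And>x. x \<in> PiE {..<L} (\<lambda>_. \<Omega>1) \<Longrightarrow> F x = F' x"
    and "\<And>y. y \<in> PiE {..<L} (\<lambda>_. \<Omega>2) \<Longrightarrow> G y = G' y"
  shows "measure_pmf.expectation (prod_pmf L \<mu>) (row_product L k F G)
       = measure_pmf.expectation (prod_pmf L \<mu>) (row_product L k F' G')"
  unfolding row_product_def
proof (intro expectation_pmf_cong prod.cong refl)
  fix Z j assume Z: "Z \<in> set_pmf (prod_pmf L \<mu>)" and "j \<in> {..<k}"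
  have "Z i \<in> set_pmf \<mu>" if "i < L" for i
    using Z that unfolding set_pmf_prod_pmf by (auto simp: PiE_dflt_def)
  then have fst: "fst (Z i) \<in> PiE {..<k} (\<lambda>_. \<Omega>1)" and snd: "snd (Z i) \<in> PiE {..<k} (\<lambda>_. \<Omega>2)"
    if "i < L" for i
    using that by (metis assms(1) mem_Times_iff subsetD)+
  have "row L (\<lambda>i. fst (Z i)) j \<in> PiE {..<L} (\<lambda>_. \<Omega>1)"
    "row L (\<lambda>i. snd (Z i)) j \<in> PiE {..<L} (\<lambda>_. \<Omega>2)"
    using \<open>j \<in> {..<k}\<close> by (intro row_in_PiE fst snd; simp)+
  then show "F (row L (\<lambda>i. fst (Z i)) j) * G (row L (\<lambda>i. snd (Z i)) j)
           = F' (row L (\<lambda>i. fst (Z i)) j) * G' (row L (\<lambda>i. snd (Z i)) j)"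
    by (simp add: assms(2,3))
qed

text \<open>Clamping \<open>F\<close> and \<open>G\<close> to \<open>[-1, 1]\<close> changes neither side, as they are only evaluated on \<open>\<Omega>\<^sup>L\<close>.\<close>

lemma decoupling_bound_on_support:
  fixes \<mu> :: "((nat \<Rightarrow> 'a) \<times> (nat \<Rightarrow> 'b)) pmf"
    and F :: "(nat \<Rightarrow> 'a) \<Rightarrow> real" and G :: "(nat \<Rightarrow> 'b) \<Rightarrow> real"
  assumes supp: "set_pmf \<mu> \<subseteq> PiE {..<k} (\<lambda>_. \<Omega>1) \<times> PiE {..<k} (\<lambda>_. \<Omega>2)"
    and \<mu>: "pairwise_product k \<nu>1 \<nu>2 \<mu>"
    and F: "\<And>x. x \<in> PiE {..<L} (\<lambda>_. \<Omega>1) \<Longrightarrow> \<bar>F x\<bar> \<le> 1"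
    and G: "\<And>y. y \<in> PiE {..<L} (\<lambda>_. \<Omega>2) \<Longrightarrow> \<bar>G y\<bar> \<le> 1"
  shows "\<bar>measure_pmf.expectation (prod_pmf L \<mu>) (row_product L k F G)
          - row_moment L k (map_pmf fst \<mu>) F * row_moment L k (map_pmf snd \<mu>) G\<bar>
     \<le> 4 * real k ^ 3 * max (sqrt (\<Sum>i<L. influence \<nu>1 L F i)) (sqrt (\<Sum>i<L. influence \<nu>2 L G i))
        * sqrt (\<Sum>i<L. influence \<nu>1 L F i * influence \<nu>2 L G i)"
proof (cases "k = 0")
  case True
  then show ?thesis by (simp add: row_product_def[abs_def] row_moment_def)
next
  case False
  define F' where "F' x = max (-1) (min 1 (F x))" for x
  define G' where "G' y = max (-1) (min 1 (G y))" for y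
  have F': "F x = F' x" if "x \<in> PiE {..<L} (\<lambda>_. \<Omega>1)" for x
    using F[OF that] by (simp add: F'_def abs_le_iff max_def min_def)
  have G': "G y = G' y" if "y \<in> PiE {..<L} (\<lambda>_. \<Omega>2)" for y
    using G[OF that] by (simp add: G'_def abs_le_iff max_def min_def)
  have columns: "fst c \<in> PiE {..<k} (\<lambda>_. \<Omega>1)" "snd c \<in> PiE {..<k} (\<lambda>_. \<Omega>2)"
    if "c \<in> set_pmf \<mu>" for c
    using subsetD[OF supp that] by (simp_all add: mem_Times_iff)
  then have supp_fst: "set_pmf (map_pmf fst \<mu>) \<subseteq> PiE {..<k} (\<lambda>_. \<Omega>1)"
    and supp_snd: "set_pmf (map_pmf snd \<mu>) \<subseteq> PiE {..<k} (\<lambda>_. \<Omega>2)"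
    unfolding set_map_pmf by (intro image_subsetI; simp)+
  have "\<nu>1 = map_pmf (\<lambda>c. fst c 0) \<mu>" "\<nu>2 = map_pmf (\<lambda>c. snd c 0) \<mu>"
    using pairwise_product_marginals[OF \<mu>, of 0] \<open>k \<noteq> 0\<close> by simp_all
  then have "set_pmf \<nu>1 \<subseteq> \<Omega>1" "set_pmf \<nu>2 \<subseteq> \<Omega>2"
    using columns \<open>k \<noteq> 0\<close> by (auto simp: PiE_def Pi_def)
  have "influence \<nu>1 L F i = influence \<nu>1 L F' i" if "i < L" for i
    by (rule influence_cong_PiE[OF \<open>set_pmf \<nu>1 \<subseteq> \<Omega>1\<close> F' that])
  moreover have "influence \<nu>2 L G i = influence \<nu>2 L G' i" if "i < L" for i
    by (rule influence_cong_PiE[OF \<open>set_pmf \<nu>2 \<subseteq> \<Omega>2\<close> G' that])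
  ultimately have "(\<Sum>i<L. influence \<nu>1 L F i) = (\<Sum>i<L. influence \<nu>1 L F' i)"
    "(\<Sum>i<L. influence \<nu>2 L G i) = (\<Sum>i<L. influence \<nu>2 L G' i)"
    "(\<Sum>i<L. influence \<nu>1 L F i * influence \<nu>2 L G i)
       = (\<Sum>i<L. influence \<nu>1 L F' i * influence \<nu>2 L G' i)"
    by (auto intro!: sum.cong)
  moreover have "\<bar>F' x\<bar> \<le> 1" "\<bar>G' y\<bar> \<le> 1" for x y
    by (simp_all add: F'_def G'_def)
  ultimately show ?thesis
    using decoupling_bound[OF \<mu>, of F' G' L]
    by (simp add: expectation_row_product_cong_PiE[OF supp F' G']
        row_moment_cong_PiE[OF supp_fst F'] row_moment_cong_PiE[OF supp_snd G'])
qed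

theorem theorem2p8:
  "\<exists>C::real. C > 0 \<and>
    (\<forall>(\<Omega>1::nat set) (\<Omega>2::nat set) (k::nat) (L::nat)
        (\<mu> :: ((nat \<Rightarrow> nat) \<times> (nat \<Rightarrow> nat)) pmf) (\<nu>1::nat pmf) (\<nu>2::nat pmf)
        (F :: (nat \<Rightarrow> nat) \<Rightarrow> real) (G :: (nat \<Rightarrow> nat) \<Rightarrow> real).
      finite \<Omega>1 \<longrightarrow> finite \<Omega>2 \<longrightarrow>
      set_pmf \<mu> \<subseteq> (PiE {..<k} (\<lambda>_. \<Omega>1)) \<times> (PiE {..<k} (\<lambda>_. \<Omega>2)) \<longrightarrow>
      (\<forall>j1<k. \<forall>j2<k.
          map_pmf (\<lambda>(x, y). (x j1, y j2)) \<mu> =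
          pair_pmf (map_pmf (\<lambda>(x, y). x j1) \<mu>) (map_pmf (\<lambda>(x, y). y j2) \<mu>)) \<longrightarrow>
      (\<forall>j<k. map_pmf (\<lambda>(x, y). x j) \<mu> = \<nu>1) \<longrightarrow>
      (\<forall>j<k. map_pmf (\<lambda>(x, y). y j) \<mu> = \<nu>2) \<longrightarrow>
      (\<forall>x \<in> PiE {..<L} (\<lambda>_. \<Omega>1). \<bar>F x\<bar> \<le> 1) \<longrightarrow>
      (\<forall>y \<in> PiE {..<L} (\<lambda>_. \<Omega>2). \<bar>G y\<bar> \<le> 1) \<longrightarrow>
      (let \<tau> = sqrt (\<Sum>i<L. influence \<nu>1 L F i * influence \<nu>2 L G i);
           \<Gamma> = max (sqrt (\<Sum>i<L. influence \<nu>1 L F i)) (sqrt (\<Sum>i<L. influence \<nu>2 L G i))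
       in \<bar>measure_pmf.expectation (prod_pmf L \<mu>)
               (\<lambda>Z. \<Prod>j<k. F (row L (\<lambda>i. fst (Z i)) j) * G (row L (\<lambda>i. snd (Z i)) j))
            - measure_pmf.expectation (prod_pmf L (map_pmf fst \<mu>))
               (\<lambda>X. \<Prod>j<k. F (row L X j))
              * measure_pmf.expectation (prod_pmf L (map_pmf snd \<mu>))
               (\<lambda>Y. \<Prod>j<k. G (row L Y j))\<bar>
          \<le> 2 powr (C * real k) * \<Gamma> * \<tau>))"
proof (intro exI[of _ "5::real"] conjI allI impI, unfold Let_def, goal_cases)
  case (2 \<Omega>1 \<Omega>2 k L \<mu> \<nu>1 \<nu>2 F G)
  have \<mu>: "pairwise_product k \<nu>1 \<nu>2 \<mu>"
    using 2(4-6) by (simp add: pairwise_product_def case_prod_unfold)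
  show ?case (is "?lhs \<le> 2 powr (5 * real k) * ?\<Gamma> * ?\<tau>")
  proof -
    have "?lhs \<le> 4 * real k ^ 3 * ?\<Gamma> * ?\<tau>"
      using decoupling_bound_on_support[OF 2(3) \<mu>] 2(7,8)
      by (simp add: row_product_def[abs_def] row_moment_def)
    also have "\<dots> \<le> 2 powr (5 * real k) * ?\<Gamma> * ?\<tau>"
      by (intro mult_right_mono four_mult_cube_le_two_powr mult_nonneg_nonneg)
         (simp_all add: le_max_iff_disj sum_nonneg influence_nonneg)
    finally show ?thesis .
  qed
qed simp

end
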